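(* Let $R_X\subseteq U_X$ be given and let $\nu,\gamma,G_X,B_X,\sigma^2$ be defined from $(f,\mathcal{T},R_X)$ as in the context. Define $B_\eta:=\min\{\sigma^2,\,1-\nu^2\}$. Let $\eta\in(0,B_\eta)$, put $\tau:=\sqrt{1-\eta}$, and let $$R'_X:=\{x\in U_X:\ \Pr_{h\sim\mathcal{T}}[h(x)=f(x)]<\tau\}.$$ Then: (i) $|R'_X\cap(U_X\setminus W_X)|\le \frac{\nu}{1-\tau}\,|U_X\setminus W_X|$; (ii) $\left(1-\frac{\gamma}{\tau}\right)|R_X|\le |R_X\cap R'_X|$; (iii) $G_X\subseteq R'_X$; (iv) $|R'_X\cap B_X|\ge \frac{\sigma^2-\eta}{1-\eta}\,|B_X|$.
   Context: Setting. $\mathcal{X}$ is an input set and $\mathcal{Y}$ a finite set of labels. $U$ is a finite nonempty set of labeled test points $(x,y_x)$ with $x\in\mathcal{X}$, $y_x\in\mathcal{Y}$ and distinct inputs; $U_X$ is its set of inputs. All probabilities and expectations over $x$ (or $(x,y_x)$) are with respect to the uniform distribution on $U$ (or on the indicated subset when conditioning). $f:\mathcal{X}\to\mathcal{Y}$ is a fixed classifier. $\mathcal{T}$ is a probability distribution on a set of classifiers $h:\mathcal{X}\to\mathcal{Y}$ (an ensemble); $h\sim\mathcal{T}$ is drawn independently of $x$. $W_X:=\{x\in U_X: f(x)\neq y_x\}$ is the set of misclassified points, $e_f:=|W_X|/|U_X|$ and $\mathrm{acc}(f):=1-e_f$. For $x\in U_X$ the diversity is $\sigma_x^2:=1-\sum_{y\in\mathcal{Y}}\big(\Pr_{h\sim\mathcal{T}}[h(x)=y]\big)^2=1-\Pr_{h_1,h_2\sim\mathcal{T}\text{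 i.i.d.}}[h_1(x)=h_2(x)]$. Quantities relative to a set $R_X\subseteq U_X$: $\nu:=\Pr_{(x,y_x)\sim U,\,h\sim\mathcal{T}}[h(x)\neq y_x\mid f(x)=y_x]$ (set $\nu:=0$ if $U_X\setminus W_X=\emptyset$); $\gamma:=\Pr_{x\sim R_X,\,h\sim\mathcal{T}}[h(x)=f(x)]$ with $x$ uniform on $R_X$ (set $\gamma:=0$ if $R_X=\emptyset$); $G_X:=\{x\in W_X\setminus R_X:\ \Pr_{h\sim\mathcal{T}}[h(x)=y_x]\ge 1-\nu\}$; $B_X:=W_X\setminus(R_X\cup G_X)$; $\sigma^2:=\mathbb{E}[\sigma_x^2\mid x\in B_X]$, the average of $\sigma_x^2$ over $B_X$ (set $\sigma^2:=1$ if $B_X=\emptyset$). *)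

theory Defs
  imports "HOL-Probability.Probability"
begin

text \<open>The test set U is represented by its finite input set UX together with the
  labelling function yl (inputs are distinct, so U = {(x, yl x) | x \<in> UX}).\<close>

definition pT :: "('x \<Rightarrow> 'y) pmf \<Rightarrow> 'x \<Rightarrow> 'y \<Rightarrow> real" where
  "pT T x y = measure_pmf.prob T {h. h x = y}"

definition wrongX :: "'x set \<Rightarrow> ('x \<Rightarrow> 'y) \<Rightarrow> ('x \<Rightarrow> 'y) \<Rightarrow> 'x set" where
  "wrongX UX yl f = {x \<in> UX. f x \<noteq> yl x}"

definition divX :: "('x \<Rightarrow> 'y::finite) pmf \<Rightarrow> 'x \<Rightarrow> real" where
  "divX T x = 1 - (\<Sum>y\<in>UNIV. (pT T x y)^2)"

definition nuX :: "'x set \<Rightarrow> ('x \<Rightarrow> 'y) \<Rightarrow> ('x \<Rightarrow> 'y) \<Rightarrow> ('x \<Rightarrow> 'y) pmf \<Rightarrow> real" where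
  "nuX UX yl f T = (let C = UX - wrongX UX yl f in
     if C = {} then 0 else (\<Sum>x\<in>C. 1 - pT T x (yl x)) / real (card C))"

definition gammaX :: "'x set \<Rightarrow> ('x \<Rightarrow> 'y) \<Rightarrow> ('x \<Rightarrow> 'y) pmf \<Rightarrow> real" where
  "gammaX RX f T = (if RX = {} then 0 else (\<Sum>x\<in>RX. pT T x (f x)) / real (card RX))"

definition goodX :: "'x set \<Rightarrow> ('x \<Rightarrow> 'y) \<Rightarrow> ('x \<Rightarrow> 'y) \<Rightarrow> ('x \<Rightarrow> 'y) pmf \<Rightarrow> 'x set \<Rightarrow> 'x set" where
  "goodX UX yl f T RX = {x \<in> wrongX UX yl f - RX. pT T x (yl x) \<ge> 1 - nuX UX yl f T}"

definition badX :: "'x set \<Rightarrow> ('x \<Rightarrow> 'y) \<Rightarrow> ('x \<Rightarrow> 'y) \<Rightarrow> ('x \<Rightarrow> 'y) pmf \<Rightarrow> 'x set \<Rightarrow> 'x set" where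
  "badX UX yl f T RX = wrongX UX yl f - (RX \<union> goodX UX yl f T RX)"

definition sigma2X :: "'x set \<Rightarrow> ('x \<Rightarrow> 'y::finite) \<Rightarrow> ('x \<Rightarrow> 'y) \<Rightarrow> ('x \<Rightarrow> 'y) pmf \<Rightarrow> 'x set \<Rightarrow> real" where
  "sigma2X UX yl f T RX = (let B = badX UX yl f T RX in
     if B = {} then 1 else (\<Sum>x\<in>B. divX T x) / real (card B))"

definition BetaX :: "'x set \<Rightarrow> ('x \<Rightarrow> 'y::finite) \<Rightarrow> ('x \<Rightarrow> 'y) \<Rightarrow> ('x \<Rightarrow> 'y) pmf \<Rightarrow> 'x set \<Rightarrow> real" where
  "BetaX UX yl f T RX = min (sigma2X UX yl f T RX) (1 - (nuX UX yl f T)^2)"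

definition newRX :: "'x set \<Rightarrow> ('x \<Rightarrow> 'y) \<Rightarrow> ('x \<Rightarrow> 'y) pmf \<Rightarrow> real \<Rightarrow> 'x set" where
  "newRX UX f T tau = {x \<in> UX. pT T x (f x) < tau}"

end

theory Submission
  imports Defs
begin

text \<open>Each of the four bounds is a counting (Markov-type) argument over the points of the
  relevant set: a point outside R' has agreement with f at least \<tau>, a point inside has
  agreement below \<tau>. For (iii), a misclassified point with true-label agreement at least
  1 - \<nu> has agreement at most \<nu> < \<tau> with f, because the two labels differ. For (iv),
  agreement at least \<tau> forces diversity at most 1 - \<tau>^2 = \<eta>, so a set whose average
  diversity is \<sigma>^2 must have many points in R'.\<close>

lemma card_mult_le_sum_of_lower_bound:
  fixes g :: "'a \<Rightarrow> real"
  assumes "finite A" and "S \<subseteq> A"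
    and "\<And>x. x \<in> A \<Longrightarrow> 0 \<le> g x" and "\<And>x. x \<in> S \<Longrightarrow> c \<le> g x"
  shows "c * real (card S) \<le> (\<Sum>x\<in>A. g x)"
proof -
  have "c * real (card S) = (\<Sum>x\<in>S. c)" by simp
  also have "\<dots> \<le> (\<Sum>x\<in>S. g x)" using assms(4) by (rule sum_mono)
  also have "\<dots> \<le> (\<Sum>x\<in>A. g x)" using assms by (intro sum_mono2) auto
  finally show ?thesis .
qed

lemma sum_le_card_Int_plus_card_Diff:
  fixes g :: "'a \<Rightarrow> real"
  assumes "finite A"
    and "\<And>x. x \<in> A \<Longrightarrow> g x \<le> 1" and "\<And>x. x \<in> A - S \<Longrightarrow> g x \<le> e"
  shows "(\<Sum>x\<in>A. g x) \<le> real (card (A \<inter> S)) + e * real (card (A - S))"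
proof -
  have "(\<Sum>x\<in>A. g x) = (\<Sum>x\<in>A \<inter> S. g x) + (\<Sum>x\<in>A - S. g x)"
    using assms(1) by (rule sum.Int_Diff)
  also have "(\<Sum>x\<in>A \<inter> S. g x) \<le> (\<Sum>x\<in>A \<inter> S. 1)" using assms(2) by (intro sum_mono) auto
  also have "(\<Sum>x\<in>A - S. g x) \<le> (\<Sum>x\<in>A - S. e)" using assms(3) by (rule sum_mono)
  finally show ?thesis by (simp add: mult.commute)
qed

lemma real_card_Diff:
  assumes "finite A"
  shows "real (card (A - S)) = real (card A) - real (card (A \<inter> S))"
  using assms by (simp add: card_Diff_subset_Int card_mono of_nat_diff)

lemma pT_nonneg: "0 \<le> pT T x y"
  by (simp add: pT_def)

lemma pT_le_one: "pT T x y \<le> 1"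
  by (simp add: pT_def)

lemma pT_add_pT_le_one:
  assumes "a \<noteq> b"
  shows "pT T x a + pT T x b \<le> 1"
proof -
  have "pT T x a + pT T x b = measure_pmf.prob T ({h. h x = a} \<union> {h. h x = b})"
    unfolding pT_def using assms by (subst measure_pmf.finite_measure_Union) auto
  also have "\<dots> \<le> 1" by simp
  finally show ?thesis .
qed

lemma divX_le_one: "divX T x \<le> 1"
  unfolding divX_def by (simp add: sum_nonneg)

lemma divX_le_one_minus_pT_squared: "divX T x \<le> 1 - (pT T x y)\<^sup>2"
proof -
  have "(pT T x y)\<^sup>2 \<le> (\<Sum>z\<in>UNIV. (pT T x z)\<^sup>2)" by (rule member_le_sum) auto
  thus ?thesis unfolding divX_def by simp
qed

lemma divX_le_of_pT_ge_sqrt: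
  assumes "0 \<le> eta" and "eta \<le> 1" and "sqrt (1 - eta) \<le> pT T x y"
  shows "divX T x \<le> eta"
proof -
  have "1 - eta \<le> (pT T x y)\<^sup>2"
    using power_mono[OF assms(3), of 2] assms(2) by simp
  thus ?thesis using divX_le_one_minus_pT_squared[of T x y] by linarith
qed

lemma card_newRX_Int_correct_le:
  assumes "finite UX" and "tau < 1"
  shows "real (card (newRX UX f T tau \<inter> (UX - wrongX UX yl f)))
           \<le> nuX UX yl f T / (1 - tau) * real (card (UX - wrongX UX yl f))"
proof (cases "UX - wrongX UX yl f = {}")
  case False
  define C where "C = UX - wrongX UX yl f"
  have "finite C" using assms(1) unfolding C_def by simp
  have "(1 - tau) * real (card (newRX UX f T tau \<inter> C)) \<le> (\<Sum>x\<in>C. 1 - pT T x (yl x))"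
    using \<open>finite C\<close>
    by (rule card_mult_le_sum_of_lower_bound)
       (auto simp: pT_le_one C_def newRX_def wrongX_def)
  also have "\<dots> = nuX UX yl f T * real (card C)"
    using False \<open>finite C\<close> unfolding nuX_def C_def Let_def by (simp add: card_gt_0_iff)
  finally show ?thesis
    using assms(2) unfolding C_def by (simp add: pos_le_divide_eq field_simps)
next
  case True
  thus ?thesis by (simp only: True) simp
qed

lemma card_Int_newRX_ge:
  assumes "finite UX" and "RX \<subseteq> UX" and "0 < tau"
  shows "(1 - gammaX RX f T / tau) * real (card RX) \<le> real (card (RX \<inter> newRX UX f T tau))"
proof (cases "RX = {}")
  case False
  have "finite RX" using assms(1,2) finite_subset by blast
  have "tau * real (card (RX - newRX UX f T tau)) \<le> (\<Sum>x\<in>RX. pT T x (f x))"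
    using \<open>finite RX\<close>
    by (rule card_mult_le_sum_of_lower_bound) (use assms(2) in \<open>auto simp: pT_nonneg newRX_def\<close>)
  also have "\<dots> = gammaX RX f T * real (card RX)"
    using False \<open>finite RX\<close> unfolding gammaX_def by (simp add: card_gt_0_iff)
  finally show ?thesis
    using assms(3) real_card_Diff[OF \<open>finite RX\<close>, of "newRX UX f T tau"]
    by (simp add: field_simps)
qed simp

lemma goodX_subset_newRX:
  assumes "nuX UX yl f T < tau"
  shows "goodX UX yl f T RX \<subseteq> newRX UX f T tau"
proof
  fix x assume "x \<in> goodX UX yl f T RX"
  hence "x \<in> UX" and "f x \<noteq> yl x" and "pT T x (yl x) \<ge> 1 - nuX UX yl f T"
    unfolding goodX_def wrongX_def by auto
  with assms pT_add_pT_le_one[OF \<open>f x \<noteq> yl x\<close>, of T x]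
  show "x \<in> newRX UX f T tau" unfolding newRX_def by auto
qed

lemma card_newRX_Int_badX_ge:
  assumes "finite UX" and "0 \<le> eta" and "eta < 1"
  shows "(sigma2X UX yl f T RX - eta) / (1 - eta) * real (card (badX UX yl f T RX))
           \<le> real (card (newRX UX f T (sqrt (1 - eta)) \<inter> badX UX yl f T RX))"
proof -
  define B where "B = badX UX yl f T RX"
  define R' where "R' = newRX UX f T (sqrt (1 - eta))"
  have "(sigma2X UX yl f T RX - eta) / (1 - eta) * real (card B) \<le> real (card (R' \<inter> B))"
  proof (cases "B = {}")
    case False
    have "B \<subseteq> UX" unfolding B_def badX_def wrongX_def by auto
    hence "finite B" using assms(1) finite_subset by blast
    have "sigma2X UX yl f T RX * real (card B) = (\<Sum>x\<in>B. divX T x)"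
      using False \<open>finite B\<close> unfolding sigma2X_def B_def Let_def by (simp add: card_gt_0_iff)
    also have "\<dots> \<le> real (card (B \<inter> R')) + eta * real (card (B - R'))"
      using \<open>finite B\<close> divX_le_one
    proof (rule sum_le_card_Int_plus_card_Diff)
      fix x assume "x \<in> B - R'"
      thus "divX T x \<le> eta"
        using \<open>B \<subseteq> UX\<close> assms(2,3) by (intro divX_le_of_pT_ge_sqrt[where y = "f x"]) (auto simp: R'_def newRX_def)
    qed
    finally have "(sigma2X UX yl f T RX - eta) * real (card B) \<le> (1 - eta) * real (card (B \<inter> R'))"
      using real_card_Diff[OF \<open>finite B\<close>, of R'] by (simp add: algebra_simps)
    thus ?thesis using assms(3) by (simp add: field_simps Int_commute)
  qed simp
  thus ?thesis unfolding B_def R'_def .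
qed

theorem mainTheorem1:
  fixes UX :: "'x set" and yl f :: "'x \<Rightarrow> 'y::finite" and T :: "('x \<Rightarrow> 'y) pmf"
    and RX :: "'x set" and eta :: real
  assumes "finite UX" and "UX \<noteq> {}" and "RX \<subseteq> UX"
    and "0 < eta" and "eta < BetaX UX yl f T RX"
  shows
    "let W = wrongX UX yl f; nu = nuX UX yl f T; gam = gammaX RX f T;
         G = goodX UX yl f T RX; B = badX UX yl f T RX; s2 = sigma2X UX yl f T RX;
         tau = sqrt (1 - eta); R' = newRX UX f T tau in
       real (card (R' \<inter> (UX - W))) \<le> nu / (1 - tau) * real (card (UX - W))
     \<and> (1 - gam / tau) * real (card RX) \<le> real (card (RX \<inter> R'))
     \<and> G \<subseteq> R'
     \<and> real (card (R' \<inter> B)) \<ge> (s2 - eta) / (1 - eta) * real (card B)"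
proof -
  have eta_nu: "eta < 1 - (nuX UX yl f T)\<^sup>2" using assms(5) unfolding BetaX_def by simp
  hence "eta < 1" using zero_le_power2[of "nuX UX yl f T"] by linarith
  have "nuX UX yl f T < sqrt (1 - eta)" using eta_nu by (intro real_less_rsqrt) simp
  moreover have "0 < sqrt (1 - eta)" and "sqrt (1 - eta) < 1" using assms(4) \<open>eta < 1\<close> by auto
  ultimately show ?thesis
    unfolding Let_def
    using assms(1,3,4) \<open>eta < 1\<close>
    by (intro conjI card_newRX_Int_correct_le card_Int_newRX_ge goodX_subset_newRX
          card_newRX_Int_badX_ge) simp_all
qed

end
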